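(* Let $J\ge1$ and $n\ge J^2$, and let $z_1,\dots,z_n\in\mathbb{R}$ be distinct. For $K\in\{1,\dots,J\}$ let $T_K=\{(\tau,\mu)\in\mathbb{R}^K\times\mathbb{R}^K:\tau_j>0,\ \sum_{j=1}^K\tau_j=1,\ \mu_1<\dots<\mu_K\}$. Let $(\tau,\mu)\in T_{K_1}$ and $(\varsigma,\nu)\in T_{K_2}$ with $K_1,K_2\le J$. If for every $i=1,\dots,n$ $$\frac{\sum_{k=1}^{K_1}\tau_k(z_i-\mu_k)\phi(z_i-\mu_k)}{\sum_{k=1}^{K_1}\tau_k\phi(z_i-\mu_k)}=\frac{\sum_{j=1}^{K_2}\varsigma_j(z_i-\nu_j)\phi(z_i-\nu_j)}{\sum_{j=1}^{K_2}\varsigma_j\phi(z_i-\nu_j)},$$ then $K_1=K_2$, $\tau=\varsigma$ and $\mu=\nu$.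
   Context: $\phi$ denotes the standard normal density. The displayed equality is equivalent to $\frac{\partial}{\partial z_i}\big[Q(\tau,\mu,z)-Q(\varsigma,\nu,z)\big]=0$, where $Q(\tau,\mu,z)=-\sum_{i=1}^n\log\sum_{k}\tau_k\phi(z_i-\mu_k)$. *)

theory Defs
  imports "HOL-Analysis.Analysis"
begin

definition std_normal_density :: "real \<Rightarrow> real" where
  "std_normal_density x = exp (- (x^2) / 2) / sqrt (2 * pi)"

text \<open>Parameter set T_K: vectors in R^K represented as functions on indices 0..K-1.\<close>
definition T_set :: "nat \<Rightarrow> ((nat \<Rightarrow> real) \<times> (nat \<Rightarrow> real)) set" where
  "T_set K = {(tau, mu). (\<forall>j<K. tau j > 0) \<and> (\<Sum>j<K. tau j) = 1 \<and>
                         (\<forall>j k. j < k \<and> k < K \<longrightarrow> mu j < mu k)}"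

definition mix_ratio :: "nat \<Rightarrow> (nat \<Rightarrow> real) \<Rightarrow> (nat \<Rightarrow> real) \<Rightarrow> real \<Rightarrow> real" where
  "mix_ratio K tau mu z =
     (\<Sum>k<K. tau k * (z - mu k) * std_normal_density (z - mu k)) /
     (\<Sum>k<K. tau k * std_normal_density (z - mu k))"

end

theory Submission
  imports Defs
begin

text \<open>
  Write \<open>D\<^sub>1, D\<^sub>2\<close> for the two mixture densities and \<open>N\<^sub>i = - D\<^sub>i'\<close> for the numerators,
  so the hypothesis says that the cross term \<open>N\<^sub>1 D\<^sub>2 - N\<^sub>2 D\<^sub>1\<close> vanishes at the \<open>n\<close> points.
  Since \<open>\<phi>(z - a) \<phi>(z - b) = \<phi>(z)\<^sup>2 e\<^bsup>-(a\<^sup>2 + b\<^sup>2)/2\<^esup> e\<^bsup>(a + b) z\<^esup>\<close>, the cross term is \<open>\<phi>(z)\<^sup>2\<close> times an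
  exponential sum with at most \<open>K\<^sub>1 K\<^sub>2 \<le> J\<^sup>2 \<le> n\<close> frequencies. By the Rolle argument an
  exponential sum has fewer real zeros than frequencies unless it vanishes identically,
  so the cross term is zero everywhere. It is, up to sign, the numerator of \<open>(D\<^sub>1 / D\<^sub>2)'\<close>,
  hence \<open>D\<^sub>1 = C D\<^sub>2\<close>. Dividing by \<open>\<phi>(z)\<close> turns this into an identity of exponential sums
  with positive coefficients, whose coefficients and frequencies are then unique; the
  normalisation of the weights forces \<open>C = 1\<close>.
\<close>

lemma Rolle_finite_zeros:
  fixes f f' :: "real \<Rightarrow> real"
  assumes deriv: "\<And>x. (f has_real_derivative f' x) (at x)"
    and "finite Z" and "\<forall>x\<in>Z. f x = 0"
  shows "\<exists>W. finite W \<and> card W = card Z - 1 \<and> (\<forall>w\<in>W. f' w = 0 \<and> w < Max Z)"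
  \<comment> \<open>the bound \<open>w < Max Z\<close> keeps the zero found between the two largest points of \<open>Z\<close>
    apart from the inductively obtained ones\<close>
  using assms(2,3)
proof (induction "card Z" arbitrary: Z rule: less_induct)
  case less
  show ?case
  proof (cases "card Z \<le> 1")
    case True
    then show ?thesis by (intro exI[of _ "{}"]) auto
  next
    case False
    define b where "b = Max Z"
    define Z' where "Z' = Z - {b}"
    have "Z \<noteq> {}" using False by auto
    then have "b \<in> Z" using less.prems(1) by (simp add: b_def)
    then have card_Z': "card Z' = card Z - 1" and "finite Z'"
      using less.prems(1) by (simp_all add: Z'_def)
    then have "Z' \<noteq> {}" using False by auto
    define a where "a = Max Z'"
    have "a \<in> Z'" using \<open>finite Z'\<close> \<open>Z' \<noteq> {}\<close> by (simp add: a_def)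
    then have "a < b"
      using less.prems(1) by (auto simp: Z'_def b_def order_less_le)
    obtain W' where W': "finite W'" "card W' = card Z' - 1" "\<forall>w\<in>W'. f' w = 0 \<and> w < a"
      using less.hyps[of Z'] card_Z' False \<open>finite Z'\<close> less.prems(2)
      by (auto simp: Z'_def a_def)
    have "f a = f b" using less.prems(2) \<open>a \<in> Z'\<close> \<open>b \<in> Z\<close> by (auto simp: Z'_def)
    then obtain x where x: "a < x" "x < b" "(f has_real_derivative 0) (at x)"
      using Rolle[OF \<open>a < b\<close>] deriv
      by (metis DERIV_continuous continuous_at_imp_continuous_on real_differentiable_def)
    have "f' x = 0" using DERIV_unique[OF deriv x(3)] .
    moreover have "x \<notin> W'" using W'(3) x(1) by auto
    ultimately show ?thesis
      using W' x card_Z' False by (intro exI[of _ "insert x W'"]) (auto simp: b_def)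
  qed
qed

lemma exp_sum_coeffs_eq_0:
  fixes S Z :: "real set" and c :: "real \<Rightarrow> real"
  assumes "finite S" and "finite Z" and "card S \<le> card Z"
    and "\<forall>x\<in>Z. (\<Sum>e\<in>S. c e * exp (e * x)) = 0"
  shows "\<forall>e\<in>S. c e = 0"
  using assms
proof (induction S arbitrary: Z c rule: finite_induct)
  case empty
  then show ?case by simp
next
  case (insert x F)
  \<comment> \<open>multiplying by \<open>e\<^bsup>-x y\<^esup>\<close> and differentiating removes the frequency \<open>x\<close>\<close>
  define g where "g y = c x + (\<Sum>e\<in>F. c e * exp ((e - x) * y))" for y
  define g' where "g' y = (\<Sum>e\<in>F. c e * (e - x) * exp ((e - x) * y))" for y
  have "g y = exp (- (x * y)) * (\<Sum>e\<in>insert x F. c e * exp (e * y))" for y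
    using insert.hyps unfolding g_def
    by (simp add: sum_distrib_left algebra_simps flip: exp_add)
  then have "\<forall>y\<in>Z. g y = 0" using insert.prems(3) by simp
  moreover have "(g has_real_derivative g' y) (at y)" for y
    unfolding g_def g'_def
    by (auto intro!: derivative_eq_intros sum.cong simp: algebra_simps)
  ultimately obtain W where W: "finite W" "card W = card Z - 1" "\<forall>w\<in>W. g' w = 0"
    using Rolle_finite_zeros[of g g' Z] insert.prems(1) by blast
  have "(\<Sum>e\<in>F. c e * (e - x) * exp (e * w)) = exp (x * w) * g' w" for w
    unfolding g'_def by (simp add: sum_distrib_left algebra_simps flip: exp_add)
  then have "\<forall>w\<in>W. (\<Sum>e\<in>F. c e * (e - x) * exp (e * w)) = 0" using W(3) by simp
  moreover have "card F \<le> card W" using W(2) insert.hyps insert.prems(2) by simp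
  ultimately have "\<forall>e\<in>F. c e * (e - x) = 0"
    using insert.IH[OF W(1), of "\<lambda>e. c e * (e - x)"] by simp
  then have F0: "\<forall>e\<in>F. c e = 0" using insert.hyps(2) by fastforce
  obtain y where "y \<in> Z" using insert.hyps insert.prems(2) by fastforce
  then have "c x * exp (x * y) = 0" using insert.prems(3) insert.hyps F0 by auto
  then show ?case using F0 by simp
qed

lemma exp_sum_group:
  fixes w h :: "'i \<Rightarrow> real"
  assumes "finite I"
  shows "(\<Sum>i\<in>I. w i * exp (h i * x)) =
    (\<Sum>e\<in>h ` I. (\<Sum>i\<in>{i\<in>I. h i = e}. w i) * exp (e * x))"
proof -
  have "(\<Sum>i\<in>I. w i * exp (h i * x)) = (\<Sum>e\<in>h ` I. \<Sum>i\<in>{i\<in>I. h i = e}. w i * exp (h i * x))"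
    by (rule sum.group[symmetric]) (use assms in auto)
  also have "\<dots> = (\<Sum>e\<in>h ` I. (\<Sum>i\<in>{i\<in>I. h i = e}. w i) * exp (e * x))"
    by (auto intro!: sum.cong simp: sum_distrib_right)
  finally show ?thesis .
qed

lemma exp_sum_group_coeffs_eq_0:
  fixes w h :: "'i \<Rightarrow> real"
  assumes "finite I" and "finite Z" and "card (h ` I) \<le> card Z"
    and "\<forall>x\<in>Z. (\<Sum>i\<in>I. w i * exp (h i * x)) = 0"
  shows "(\<Sum>i\<in>{i\<in>I. h i = e}. w i) = 0"
proof (cases "e \<in> h ` I")
  case True
  have "\<forall>x\<in>Z. (\<Sum>e\<in>h ` I. (\<Sum>i\<in>{i\<in>I. h i = e}. w i) * exp (e * x)) = 0"
    using assms(4) by (simp add: exp_sum_group[OF assms(1)])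
  then show ?thesis
    using exp_sum_coeffs_eq_0[of "h ` I" Z "\<lambda>e. \<Sum>i\<in>{i\<in>I. h i = e}. w i"] assms(1-3) True
    by blast
next
  case False
  then have "{i\<in>I. h i = e} = {}" by auto
  then show ?thesis by (simp only: sum.empty)
qed

lemma exp_sum_eq_0_everywhere:
  fixes w h :: "'i \<Rightarrow> real"
  assumes "finite I" and "finite Z" and "card (h ` I) \<le> card Z"
    and "\<forall>x\<in>Z. (\<Sum>i\<in>I. w i * exp (h i * x)) = 0"
  shows "(\<Sum>i\<in>I. w i * exp (h i * x)) = 0"
  unfolding exp_sum_group[OF assms(1)] using exp_sum_group_coeffs_eq_0[OF assms] by simp

lemma strict_mono_on_image_eq:
  fixes f g :: "nat \<Rightarrow> 'a::linorder"
  assumes "strict_mono_on {..<m} f" and "strict_mono_on {..<n} g"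
    and "f ` {..<m} = g ` {..<n}"
  shows "m = n \<and> (\<forall>k<m. f k = g k)"
proof -
  have sorted: "sorted_list_of_set (h ` {..<K}) = map h [0..<K]"
    if "strict_mono_on {..<K} h" for h :: "nat \<Rightarrow> 'a" and K
  proof -
    have "card (h ` {..<K}) = K"
      using strict_mono_on_imp_inj_on[OF that] by (simp add: card_image)
    moreover have "sorted_wrt (<) (map h [0..<K])"
      using that by (auto simp: sorted_wrt_iff_nth_less strict_mono_on_def)
    ultimately show ?thesis
      by (subst sorted_list_of_set_unique[symmetric]) auto
  qed
  have "map f [0..<m] = map g [0..<n]"
    using sorted[OF assms(1)] sorted[OF assms(2)] assms(3) by simp
  then show ?thesis by (metis length_map length_upt diff_zero nth_map_upt add_0)
qed

lemma exp_sum_unique: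
  fixes a b m v :: "nat \<Rightarrow> real"
  assumes m: "strict_mono_on {..<K1} m" and v: "strict_mono_on {..<K2} v"
    and a: "\<forall>k<K1. a k \<noteq> 0" and b: "\<forall>j<K2. b j \<noteq> 0"
    and eq: "\<forall>x. (\<Sum>k<K1. a k * exp (m k * x)) = (\<Sum>j<K2. b j * exp (v j * x))"
  shows "K1 = K2 \<and> (\<forall>k<K1. a k = b k \<and> m k = v k)"
proof -
  \<comment> \<open>the difference of the two sides as one exponential sum over a disjoint union\<close>
  define I where "I = {..<K1} <+> {..<K2}"
  define h where "h = case_sum m v"
  define w where "w = case_sum a (\<lambda>j. - b j)"
  define A where "A e = (\<Sum>k\<in>{k\<in>{..<K1}. m k = e}. a k)" for e
  define B where "B e = (\<Sum>j\<in>{j\<in>{..<K2}. v j = e}. b j)" for e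
  have "(\<Sum>i\<in>I. w i * exp (h i * x)) = 0" for x
    using eq by (simp add: I_def h_def w_def sum.Plus sum_negf)
  then have "(\<Sum>i\<in>{i\<in>I. h i = e}. w i) = 0" for e
    using exp_sum_group_coeffs_eq_0[of I "real ` {..<card (h ` I)}" h w]
    by (simp add: I_def card_image)
  moreover have "{i\<in>I. h i = e} = {k\<in>{..<K1}. m k = e} <+> {j\<in>{..<K2}. v j = e}" for e
    by (auto simp: I_def h_def)
  ultimately have AB: "A e = B e" for e
    by (simp add: A_def B_def w_def sum.Plus sum_negf)
  have A_m: "A (m k) = a k" if "k < K1" for k
  proof -
    have "{k'\<in>{..<K1}. m k' = m k} = {k}"
      using strict_mono_on_imp_inj_on[OF m] that by (auto dest: inj_onD)
    then show ?thesis by (simp add: A_def)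
  qed
  have B_v: "B (v j) = b j" if "j < K2" for j
  proof -
    have "{j'\<in>{..<K2}. v j' = v j} = {j}"
      using strict_mono_on_imp_inj_on[OF v] that by (auto dest: inj_onD)
    then show ?thesis by (simp add: B_def)
  qed
  have "m ` {..<K1} \<subseteq> v ` {..<K2}"
  proof
    fix e assume "e \<in> m ` {..<K1}"
    then obtain k where "k < K1" "e = m k" by auto
    then have "B e = a k" using AB[of e] A_m[of k] by simp
    then have "B e \<noteq> 0" using a \<open>k < K1\<close> by simp
    then obtain i where "i \<in> {i\<in>{..<K2}. v i = e}"
      unfolding B_def by (meson sum.not_neutral_contains_not_neutral)
    then show "e \<in> v ` {..<K2}" by auto
  qed
  moreover have "v ` {..<K2} \<subseteq> m ` {..<K1}"
  proof
    fix e assume "e \<in> v ` {..<K2}"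
    then obtain j where "j < K2" "e = v j" by auto
    then have "A e = b j" using AB[of e] B_v[of j] by simp
    then have "A e \<noteq> 0" using b \<open>j < K2\<close> by simp
    then obtain i where "i \<in> {i\<in>{..<K1}. m i = e}"
      unfolding A_def by (meson sum.not_neutral_contains_not_neutral)
    then show "e \<in> m ` {..<K1}" by auto
  qed
  ultimately have K: "K1 = K2" and mv: "\<forall>k<K1. m k = v k"
    using strict_mono_on_image_eq[OF m v] by blast+
  have "a k = b k" if "k < K1" for k
    using AB[of "m k"] A_m[OF that] B_v[of k] K mv that by simp
  then show ?thesis using K mv by simp
qed

abbreviation "\<phi> \<equiv> std_normal_density"

lemma std_normal_density_pos: "0 < \<phi> x"
  by (simp add: std_normal_density_def)

lemma std_normal_density_diff: "\<phi> (z - m) = \<phi> z * exp (- (m\<^sup>2) / 2) * exp (m * z)"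
proof -
  have "exp (- ((z - m)\<^sup>2) / 2) = exp (- (z\<^sup>2) / 2 + - (m\<^sup>2) / 2 + m * z)"
    by (simp add: power2_eq_square field_simps)
  then show ?thesis unfolding std_normal_density_def exp_add by simp
qed

lemma has_real_derivative_std_normal_density_diff:
  "((\<lambda>z. \<phi> (z - m)) has_real_derivative - (x - m) * \<phi> (x - m)) (at x)"
proof -
  define c where "c = sqrt (2 * pi)"
  have "c > 0" by (simp add: c_def)
  have "((\<lambda>z. exp (- ((z - m)\<^sup>2) / 2) / c) has_real_derivative
      - (x - m) * (exp (- ((x - m)\<^sup>2) / 2) / c)) (at x)"
    using \<open>c > 0\<close> by (auto intro!: derivative_eq_intros simp: field_simps)
  then show ?thesis by (simp add: std_normal_density_def c_def)
qed

definition mix_density :: "nat \<Rightarrow> (nat \<Rightarrow> real) \<Rightarrow> (nat \<Rightarrow> real) \<Rightarrow> real \<Rightarrow> real" where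
  "mix_density K t m z = (\<Sum>k<K. t k * \<phi> (z - m k))"

definition mix_numerator :: "nat \<Rightarrow> (nat \<Rightarrow> real) \<Rightarrow> (nat \<Rightarrow> real) \<Rightarrow> real \<Rightarrow> real" where
  "mix_numerator K t m z = (\<Sum>k<K. t k * (z - m k) * \<phi> (z - m k))"

lemma mix_ratio_eq_divide: "mix_ratio K t m z = mix_numerator K t m z / mix_density K t m z"
  unfolding mix_ratio_def mix_numerator_def mix_density_def ..

lemma mix_density_pos:
  assumes "0 < K" and "\<forall>k<K. 0 < t k"
  shows "0 < mix_density K t m z"
  unfolding mix_density_def using assms
  by (intro sum_pos) (auto simp: std_normal_density_pos)

lemma has_real_derivative_mix_density:
  "(mix_density K t m has_real_derivative - mix_numerator K t m z) (at z)"
proof -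
  have "((\<lambda>x. \<Sum>k<K. t k * \<phi> (x - m k)) has_real_derivative
      (\<Sum>k<K. t k * (- (z - m k) * \<phi> (z - m k)))) (at z)"
    by (intro DERIV_sum DERIV_cmult has_real_derivative_std_normal_density_diff)
  then show ?thesis
    unfolding mix_density_def[abs_def] mix_numerator_def
    by (simp add: sum_negf[symmetric] algebra_simps)
qed

lemma mix_density_exp_sum:
  "mix_density K t m z = \<phi> z * (\<Sum>k<K. t k * exp (- ((m k)\<^sup>2) / 2) * exp (m k * z))"
  unfolding mix_density_def std_normal_density_diff
  by (simp add: sum_distrib_left algebra_simps)

lemma mix_cross_exp_sum:
  "mix_numerator K1 t m z * mix_density K2 s v z - mix_numerator K2 s v z * mix_density K1 t m z =
   (\<phi> z)\<^sup>2 * (\<Sum>p\<in>{..<K1} \<times> {..<K2}.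
     t (fst p) * s (snd p) * (v (snd p) - m (fst p)) * exp (- ((m (fst p))\<^sup>2 + (v (snd p))\<^sup>2) / 2)
       * exp ((m (fst p) + v (snd p)) * z))"
proof -
  define \<Phi> where "\<Phi> k j = t k * s j * \<phi> (z - m k) * \<phi> (z - v j)" for k j
  have N1D2: "mix_numerator K1 t m z * mix_density K2 s v z =
      (\<Sum>p\<in>{..<K1} \<times> {..<K2}. (z - m (fst p)) * \<Phi> (fst p) (snd p))"
    unfolding mix_numerator_def mix_density_def sum_product sum.cartesian_product \<Phi>_def
    by (simp add: case_prod_unfold algebra_simps)
  have N2D1: "mix_numerator K2 s v z * mix_density K1 t m z =
      (\<Sum>p\<in>{..<K1} \<times> {..<K2}. (z - v (snd p)) * \<Phi> (fst p) (snd p))"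
    unfolding mix_numerator_def mix_density_def sum_product \<Phi>_def
    by (subst sum.swap) (simp add: sum.cartesian_product case_prod_unfold algebra_simps)
  have "\<Phi> k j = (\<phi> z)\<^sup>2 * (t k * s j * exp (- ((m k)\<^sup>2 + (v j)\<^sup>2) / 2) * exp ((m k + v j) * z))"
    for k j
    unfolding \<Phi>_def std_normal_density_diff
    by (simp add: power2_eq_square field_simps flip: exp_add)
  then show ?thesis
    unfolding N1D2 N2D1
    by (simp add: sum_distrib_left flip: sum_subtractf) (simp add: algebra_simps)
qed

lemma mix_cross_eq_0:
  assumes "0 < K1" and "\<forall>k<K1. 0 < t k" and "0 < K2" and "\<forall>j<K2. 0 < s j"
    and "finite Z" and "K1 * K2 \<le> card Z"
    and "\<forall>y\<in>Z. mix_ratio K1 t m y = mix_ratio K2 s v y"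
  shows "mix_numerator K1 t m x * mix_density K2 s v x = mix_numerator K2 s v x * mix_density K1 t m x"
proof -
  define I where "I = {..<K1} \<times> {..<K2}"
  define w where "w p = t (fst p) * s (snd p) * (v (snd p) - m (fst p))
    * exp (- ((m (fst p))\<^sup>2 + (v (snd p))\<^sup>2) / 2)" for p
  define h where "h p = m (fst p) + v (snd p)" for p
  have cross: "mix_numerator K1 t m y * mix_density K2 s v y - mix_numerator K2 s v y * mix_density K1 t m y
      = (\<phi> y)\<^sup>2 * (\<Sum>p\<in>I. w p * exp (h p * y))" for y
    unfolding I_def w_def h_def by (rule mix_cross_exp_sum)
  have "\<forall>y\<in>Z. (\<Sum>p\<in>I. w p * exp (h p * y)) = 0"
  proof
    fix y assume "y \<in> Z"
    then have "mix_numerator K1 t m y / mix_density K1 t m y = mix_numerator K2 s v y / mix_density K2 s v y"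
      using assms(7) by (simp add: mix_ratio_eq_divide)
    then have "mix_numerator K1 t m y * mix_density K2 s v y = mix_numerator K2 s v y * mix_density K1 t m y"
      using mix_density_pos[OF assms(1,2), of m y] mix_density_pos[OF assms(3,4), of v y]
      by (simp add: frac_eq_eq)
    then show "(\<Sum>p\<in>I. w p * exp (h p * y)) = 0"
      using cross[of y] std_normal_density_pos[of y] by simp
  qed
  moreover have "card (h ` I) \<le> card Z"
    using card_image_le[of I h] assms(6) by (simp add: I_def card_cartesian_product)
  ultimately have "(\<Sum>p\<in>I. w p * exp (h p * x)) = 0"
    using exp_sum_eq_0_everywhere[of I Z h w] assms(5) by (simp add: I_def)
  then show ?thesis using cross[of x] by simp
qed

lemma mix_density_proportional:
  assumes "0 < K1" and "\<forall>k<K1. 0 < t k" and "0 < K2" and "\<forall>j<K2. 0 < s j"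
    and "\<forall>x. mix_numerator K1 t m x * mix_density K2 s v x = mix_numerator K2 s v x * mix_density K1 t m x"
  shows "\<exists>C>0. \<forall>x. mix_density K1 t m x = C * mix_density K2 s v x"
proof -
  define R where "R x = mix_density K1 t m x / mix_density K2 s v x" for x
  have D2_pos: "0 < mix_density K2 s v x" for x using mix_density_pos[OF assms(3,4)] .
  have "(R has_real_derivative 0) (at x)" for x
  proof -
    have "(R has_real_derivative
        (- mix_numerator K1 t m x * mix_density K2 s v x - mix_density K1 t m x * - mix_numerator K2 s v x)
        / (mix_density K2 s v x * mix_density K2 s v x)) (at x)"
      \<comment> \<open>the numerator of the quotient rule is minus the cross term\<close>
      unfolding R_def[abs_def] using D2_pos[of x]
      by (intro DERIV_divide has_real_derivative_mix_density) simp
    then show ?thesis using assms(5) by (simp add: algebra_simps)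
  qed
  then have const: "R x = R 0" for x using DERIV_isconst_all by blast
  have "mix_density K1 t m x = R 0 * mix_density K2 s v x" for x
    using const[of x] D2_pos[of x] unfolding R_def[of x] by (simp add: divide_eq_eq)
  moreover have "0 < R 0" using mix_density_pos[OF assms(1,2)] D2_pos by (simp add: R_def)
  ultimately show ?thesis by blast
qed

lemma T_set_iff:
  "(t, m) \<in> T_set K \<longleftrightarrow> (\<forall>k<K. 0 < t k) \<and> (\<Sum>k<K. t k) = 1 \<and> strict_mono_on {..<K} m"
  by (auto simp: T_set_def strict_mono_on_def)

lemma mix_density_proportional_imp_eq:
  assumes "(t, m) \<in> T_set K1" and "(s, v) \<in> T_set K2" and "C \<noteq> 0"
    and "\<forall>x. mix_density K1 t m x = C * mix_density K2 s v x"
  shows "K1 = K2 \<and> (\<forall>k<K1. t k = s k \<and> m k = v k)"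
proof -
  have t: "\<forall>k<K1. 0 < t k" "(\<Sum>k<K1. t k) = 1" "strict_mono_on {..<K1} m"
    and s: "\<forall>j<K2. 0 < s j" "(\<Sum>j<K2. s j) = 1" "strict_mono_on {..<K2} v"
    using assms(1,2) by (simp_all add: T_set_iff)
  have "(\<Sum>k<K1. t k * exp (- ((m k)\<^sup>2) / 2) * exp (m k * x)) =
      (\<Sum>j<K2. C * s j * exp (- ((v j)\<^sup>2) / 2) * exp (v j * x))" (is "?L x = ?R x") for x
  proof -
    have "\<phi> x * ?L x = \<phi> x * ?R x"
      using assms(4) by (simp add: mix_density_exp_sum sum_distrib_left algebra_simps)
    then show ?thesis using std_normal_density_pos[of x] by simp
  qed
  moreover have "\<forall>k<K1. t k * exp (- ((m k)\<^sup>2) / 2) \<noteq> 0" and "\<forall>j<K2. C * s j * exp (- ((v j)\<^sup>2) / 2) \<noteq> 0"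
    using t(1) s(1) assms(3) by auto
  ultimately have K: "K1 = K2"
    and coeffs: "\<forall>k<K1. t k * exp (- ((m k)\<^sup>2) / 2) = C * s k * exp (- ((v k)\<^sup>2) / 2) \<and> m k = v k"
    using exp_sum_unique[OF t(3) s(3), of "\<lambda>k. t k * exp (- ((m k)\<^sup>2) / 2)"
        "\<lambda>j. C * s j * exp (- ((v j)\<^sup>2) / 2)"] by auto
  have tC: "\<forall>k<K1. t k = C * s k \<and> m k = v k"
  proof (intro allI impI)
    fix k assume "k < K1"
    then show "t k = C * s k \<and> m k = v k" using coeffs[rule_format, of k] by auto
  qed
  have "C = 1"
    using t(2) s(2) tC K by (simp add: sum_distrib_left[symmetric])
  then show ?thesis using K tC by simp
qed

theorem mainTheorem7:
  fixes J n K1 K2 :: nat and z :: "nat \<Rightarrow> real"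
    and tau mu sigma nu :: "nat \<Rightarrow> real"
  assumes "J \<ge> 1" and "n \<ge> J^2"
    and "inj_on z {..<n}"
    and "1 \<le> K1" and "K1 \<le> J" and "1 \<le> K2" and "K2 \<le> J"
    and "(tau, mu) \<in> T_set K1" and "(sigma, nu) \<in> T_set K2"
    and "\<forall>i<n. mix_ratio K1 tau mu (z i) = mix_ratio K2 sigma nu (z i)"
  shows "K1 = K2 \<and> (\<forall>k<K1. tau k = sigma k \<and> mu k = nu k)"
proof -
  have pos: "0 < K1" "\<forall>k<K1. 0 < tau k" "0 < K2" "\<forall>j<K2. 0 < sigma j"
    using assms(4,6,8,9) by (simp_all add: T_set_iff)
  have "K1 * K2 \<le> J * J" using assms(5,7) by (rule mult_le_mono)
  also have "\<dots> \<le> card (z ` {..<n})" using assms(2,3) by (simp add: card_image power2_eq_square)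
  finally have card: "K1 * K2 \<le> card (z ` {..<n})" .
  have ratio: "\<forall>y\<in>z ` {..<n}. mix_ratio K1 tau mu y = mix_ratio K2 sigma nu y"
    using assms(10) by blast
  have "\<forall>x. mix_numerator K1 tau mu x * mix_density K2 sigma nu x =
      mix_numerator K2 sigma nu x * mix_density K1 tau mu x"
    using mix_cross_eq_0[OF pos finite_imageI[OF finite_lessThan] card ratio] by blast
  then obtain C where "C > 0" and "\<forall>x. mix_density K1 tau mu x = C * mix_density K2 sigma nu x"
    using mix_density_proportional[OF pos] by blast
  then show ?thesis using mix_density_proportional_imp_eq[OF assms(8,9), of C] by simp
qed

end
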